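(* Let $A$ and $B$ be layouts. Then $\Phi_A=\Phi_B$ if and only if $\mathrm{coal}(A)=\mathrm{coal}(B)$.
   Context: A nested tuple is an integer or a finite tuple of nested tuples; its flattening is the tuple of its integer leaves left to right. A layout is $L=S:D$ with $S$ (positive integers) and $D$ (nonnegative integers) nested tuples of the same nesting pattern; its flattening is the flat layout $L^\flat=S^\flat:D^\flat$. For a flat layout $(s_1,\dots,s_m):(d_1,\dots,d_m)$ the layout function is $\Phi(x)=\sum_ix_id_i$ with $x_i=\lfloor x/(s_1\cdots s_{i-1})\rfloor\bmod s_i$ on $[0,s_1\cdots s_m)$; for a layout, $\Phi_L=\Phi_{L^\flat}$. For a flat layout, $\mathrm{squeeze}$ removes modes with $s_i=1$, and $\mathrm{coal}^\flat$ is obtained from the squeeze by repeatedly replacing adjacent modes $s_i,s_{i+1}:d_i,d_{i+1}$ with $d_{i+1}=s_id_i$ by $s_is_{i+1}:d_i$. For a layout $L$ with $\mathrm{coal}^\flat(L^\flat)=(s_1,\dots,s_m):(d_1,\dots,d_m)$: $\mathrm{coal}(L)$ is this flat (depth-one) layout if $m>1$, the depth-zero layout $s_1:d_1$ if $m=1$, and $1:0$ if $m=0$. *)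

theory Defs
  imports Main
begin

text \<open>Nested tuples: an integer leaf or a finite (possibly empty) tuple of nested tuples.
  Leaves are natural numbers (shapes are positive, strides nonnegative).\<close>
datatype ntup = Leaf nat | Tup "ntup list"

fun flat :: "ntup \<Rightarrow> nat list" where
  "flat (Leaf n) = [n]"
| "flat (Tup ts) = concat (map flat ts)"

fun pattern :: "ntup \<Rightarrow> ntup" where
  "pattern (Leaf n) = Leaf 0"
| "pattern (Tup ts) = Tup (map pattern ts)"

type_synonym layout = "ntup \<times> ntup"

definition is_layout :: "layout \<Rightarrow> bool" where
  "is_layout L \<longleftrightarrow> pattern (fst L) = pattern (snd L) \<and> (\<forall>s \<in> set (flat (fst L)). 0 < s)"

definition phi_flat :: "nat list \<Rightarrow> nat list \<Rightarrow> nat \<Rightarrow> nat" where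
  "phi_flat ss ds x = (\<Sum>i<length ss. (x div (\<Prod>j<i. ss ! j)) mod (ss ! i) * ds ! i)"

definition layout_size :: "layout \<Rightarrow> nat" where
  "layout_size L = prod_list (flat (fst L))"

definition layout_fun :: "layout \<Rightarrow> nat \<Rightarrow> nat" where
  "layout_fun L x = phi_flat (flat (fst L)) (flat (snd L)) x"

definition same_layout_fun :: "layout \<Rightarrow> layout \<Rightarrow> bool" where
  "same_layout_fun A B \<longleftrightarrow> layout_size A = layout_size B \<and>
     (\<forall>x < layout_size A. layout_fun A x = layout_fun B x)"

definition squeeze :: "(nat \<times> nat) list \<Rightarrow> (nat \<times> nat) list" where
  "squeeze ms = filter (\<lambda>(s, d). s \<noteq> 1) ms"

text \<open>Fully merge adjacent modes (s_i,d_i),(s_{i+1},d_{i+1}) with d_{i+1} = s_i d_i into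
  (s_i s_{i+1}, d_i), until no such pair remains (computed right to left).\<close>
fun merge_modes :: "(nat \<times> nat) list \<Rightarrow> (nat \<times> nat) list" where
  "merge_modes [] = []"
| "merge_modes ((s1, d1) # rest) =
     (case merge_modes rest of
        [] \<Rightarrow> [(s1, d1)]
      | (s2, d2) # r \<Rightarrow> (if d2 = s1 * d1 then (s1 * s2, d1) # r else (s1, d1) # (s2, d2) # r))"

definition coal_flat :: "(nat \<times> nat) list \<Rightarrow> (nat \<times> nat) list" where
  "coal_flat ms = merge_modes (squeeze ms)"

definition coal :: "layout \<Rightarrow> layout" where
  "coal L = (let ms = coal_flat (zip (flat (fst L)) (flat (snd L))) in
     if length ms > 1 then (Tup (map (Leaf \<circ> fst) ms), Tup (map (Leaf \<circ> snd) ms))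
     else if length ms = 1 then (Leaf (fst (hd ms)), Leaf (snd (hd ms)))
     else (Leaf 1, Leaf 0))"

end

theory Submission
  imports Defs
begin

text \<open>Squeezing and merging adjacent modes change neither the size nor the layout function,
  so a layout and its coalesced mode list have the same layout function.
  Conversely, a coalesced mode list (all shapes at least 2, no mergeable adjacent pair) is
  determined by its size and its layout function: \<open>\<Phi>(1)\<close> is the first stride \<open>d\<^sub>1\<close>, and
  \<open>\<Phi>(x) = x d\<^sub>1\<close> for \<open>x < s\<^sub>1\<close> while \<open>\<Phi>(s\<^sub>1) = d\<^sub>2 \<noteq> s\<^sub>1 d\<^sub>1\<close>, which pins down the
  first shape; the remaining modes are recovered from \<open>y \<mapsto> \<Phi>(s\<^sub>1 y)\<close>.
  Finally, the nested encoding used by \<open>coal\<close> is injective on coalesced mode lists,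
  as only the empty list and \<open>[(1,0)]\<close> share an encoding.\<close>

fun mode_fun :: "(nat \<times> nat) list \<Rightarrow> nat \<Rightarrow> nat" where
  "mode_fun [] x = 0"
| "mode_fun ((s, d) # ms) x = x mod s * d + mode_fun ms (x div s)"

definition mode_size :: "(nat \<times> nat) list \<Rightarrow> nat" where
  "mode_size ms = prod_list (map fst ms)"

definition modes :: "layout \<Rightarrow> (nat \<times> nat) list" where
  "modes L = zip (flat (fst L)) (flat (snd L))"

definition layout_of_modes :: "(nat \<times> nat) list \<Rightarrow> layout" where
  "layout_of_modes ms =
     (if length ms > 1 then (Tup (map (Leaf \<circ> fst) ms), Tup (map (Leaf \<circ> snd) ms))
      else if length ms = 1 then (Leaf (fst (hd ms)), Leaf (snd (hd ms)))
      else (Leaf 1, Leaf 0))"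

lemma coal_eq_layout_of_modes: "coal L = layout_of_modes (coal_flat (modes L))"
  unfolding coal_def modes_def layout_of_modes_def Let_def ..

fun coalesced :: "(nat \<times> nat) list \<Rightarrow> bool" where
  "coalesced [] = True"
| "coalesced [(s, d)] = (2 \<le> s)"
| "coalesced ((s1, d1) # (s2, d2) # ms) = (2 \<le> s1 \<and> d2 \<noteq> s1 * d1 \<and> coalesced ((s2, d2) # ms))"

lemma mode_fun_0 [simp]: "mode_fun ms 0 = 0"
  by (induction ms) auto

lemma mode_size_Nil [simp]: "mode_size [] = 1"
  and mode_size_Cons [simp]: "mode_size (p # ms) = fst p * mode_size ms"
  by (simp_all add: mode_size_def)

lemma mode_size_pos: "(\<And>p. p \<in> set ms \<Longrightarrow> 0 < fst p) \<Longrightarrow> 0 < mode_size ms"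
  by (induction ms) auto

lemma phi_flat_Cons: "phi_flat (s # ss) (d # ds) x = x mod s * d + phi_flat ss ds (x div s)"
proof -
  have "phi_flat (s # ss) (d # ds) x =
      (\<Sum>i<Suc (length ss). x div (\<Prod>j<i. (s # ss) ! j) mod (s # ss) ! i * (d # ds) ! i)"
    by (simp add: phi_flat_def)
  also have "\<dots> =
      x mod s * d + (\<Sum>i<length ss. x div (\<Prod>j<Suc i. (s # ss) ! j) mod ss ! i * ds ! i)"
    by (subst sum.lessThan_Suc_shift) simp
  also have "(\<Sum>i<length ss. x div (\<Prod>j<Suc i. (s # ss) ! j) mod ss ! i * ds ! i)
      = phi_flat ss ds (x div s)"
    unfolding phi_flat_def
    by (intro sum.cong refl)
      (simp only: prod.lessThan_Suc_shift nth_Cons_0 nth_Cons_Suc div_mult2_eq)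
  finally show ?thesis .
qed

lemma phi_flat_eq_mode_fun: "length ss = length ds \<Longrightarrow> phi_flat ss ds x = mode_fun (zip ss ds) x"
proof (induction ss arbitrary: ds x)
  case Nil
  then show ?case by (simp add: phi_flat_def)
next
  case (Cons s ss)
  then obtain d ds' where "ds = d # ds'"
    by (cases ds) auto
  with Cons show ?case
    by (simp add: phi_flat_Cons)
qed

lemma flat_pattern: "flat (pattern t) = map (\<lambda>_. 0) (flat t)"
  by (induction t) (simp_all add: map_concat cong: map_cong)

lemma length_flat_eq_if_pattern_eq:
  assumes "pattern a = pattern b"
  shows "length (flat a) = length (flat b)"
  using arg_cong [OF assms, of "\<lambda>t. length (flat t)"] by (simp add: flat_pattern)

lemma
  assumes "is_layout L"
  shows mode_fun_modes: "mode_fun (modes L) x = layout_fun L x"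
    and mode_size_modes: "mode_size (modes L) = layout_size L"
proof -
  have len: "length (flat (fst L)) = length (flat (snd L))"
    using assms unfolding is_layout_def by (blast intro: length_flat_eq_if_pattern_eq)
  then show "mode_fun (modes L) x = layout_fun L x"
    by (simp add: modes_def layout_fun_def phi_flat_eq_mode_fun)
  show "mode_size (modes L) = layout_size L"
    using len by (simp add: modes_def mode_size_def layout_size_def)
qed

lemma mode_fun_squeeze: "mode_fun (squeeze ms) x = mode_fun ms x"
  by (induction ms arbitrary: x) (auto simp: squeeze_def)

lemma mode_size_squeeze: "mode_size (squeeze ms) = mode_size ms"
  by (induction ms) (auto simp: squeeze_def)

lemma mode_fun_merge_pair:
  assumes "d2 = s1 * d1"
  shows "mode_fun ((s1, d1) # (s2, d2) # ms) x = mode_fun ((s1 * s2, d1) # ms) x"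
proof -
  have "x mod (s1 * s2) = s1 * (x div s1 mod s2) + x mod s1"
    by (simp add: mod_mult2_eq)
  then have "x mod s1 * d1 + x div s1 mod s2 * d2 = x mod (s1 * s2) * d1"
    using assms by (simp add: algebra_simps)
  then show ?thesis
    by (simp add: div_mult2_eq add.assoc [symmetric])
qed

lemma mode_fun_merge_modes: "mode_fun (merge_modes ms) x = mode_fun ms x"
proof (induction ms arbitrary: x rule: merge_modes.induct)
  case (2 s1 d1 rest)
  have IH: "mode_fun ((s1, d1) # merge_modes rest) x = mode_fun ((s1, d1) # rest) x"
    using "2" [of "x div s1"] by simp
  show ?case
  proof (cases "merge_modes rest")
    case (Cons p ms)
    then show ?thesis
      using IH mode_fun_merge_pair [of "snd p" s1 d1 "fst p" ms x] by (cases p) auto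
  qed (use IH in simp)
qed simp

lemma mode_size_merge_modes: "mode_size (merge_modes ms) = mode_size ms"
  by (induction ms rule: merge_modes.induct) (auto split: list.split)

lemma mode_fun_coal_flat: "mode_fun (coal_flat ms) x = mode_fun ms x"
  by (simp add: coal_flat_def mode_fun_merge_modes mode_fun_squeeze)

lemma mode_size_coal_flat: "mode_size (coal_flat ms) = mode_size ms"
  by (simp add: coal_flat_def mode_size_merge_modes mode_size_squeeze)

lemma coalesced_ConsD: "coalesced (p # ms) \<Longrightarrow> 2 \<le> fst p \<and> coalesced ms"
  by (cases p; cases ms) auto

lemma coalesced_shape_ge2: "coalesced ms \<Longrightarrow> p \<in> set ms \<Longrightarrow> 2 \<le> fst p"
  by (induction ms rule: coalesced.induct) auto

lemma coalesced_merge_modes: "(\<And>p. p \<in> set ms \<Longrightarrow> 2 \<le> fst p) \<Longrightarrow> coalesced (merge_modes ms)"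
proof (induction ms rule: merge_modes.induct)
  case (2 s1 d1 rest)
  then have IH: "coalesced (merge_modes rest)" and "2 \<le> s1"
    using "2.prems" [of "(s1, d1)"] by auto
  show ?case
  proof (cases "merge_modes rest")
    case (Cons p ms)
    obtain s2 d2 where p: "p = (s2, d2)"
      by fastforce
    have "2 \<le> s2" "coalesced ms"
      using coalesced_ConsD [of p ms] Cons p IH by simp_all
    then have "2 \<le> s1 * s2"
      using \<open>2 \<le> s1\<close> mult_le_mono [of 1 s1 2 s2] by simp
    with Cons p IH \<open>2 \<le> s1\<close> show ?thesis
      by (cases ms) (auto simp: algebra_simps)
  qed (simp add: \<open>2 \<le> s1\<close>)
qed simp

lemma coalesced_coal_flat: "(\<And>p. p \<in> set ms \<Longrightarrow> 0 < fst p) \<Longrightarrow> coalesced (coal_flat ms)"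
  unfolding coal_flat_def
  by (rule coalesced_merge_modes) (force simp: squeeze_def)

lemma coalesced_coal_flat_modes: "is_layout L \<Longrightarrow> coalesced (coal_flat (modes L))"
  by (rule coalesced_coal_flat) (auto simp: is_layout_def modes_def dest: set_zip_leftD)

lemma mode_size_pos_if_coalesced: "coalesced ms \<Longrightarrow> 0 < mode_size ms"
  by (rule mode_size_pos) (fastforce dest: coalesced_shape_ge2)

lemma mode_size_ge2_if_coalesced: "coalesced (p # ms) \<Longrightarrow> 2 \<le> mode_size (p # ms)"
proof -
  assume "coalesced (p # ms)"
  then have "2 \<le> fst p" "0 < mode_size ms"
    using coalesced_ConsD [of p ms] mode_size_pos_if_coalesced by blast+
  then show ?thesis
    using mult_le_mono [of 2 "fst p" 1 "mode_size ms"] by simp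
qed

lemma coalesced_first_shape_le:
  assumes cA: "coalesced ((s, d) # A)" and cB: "coalesced ((t, e) # B)"
    and size_eq: "mode_size ((s, d) # A) = mode_size ((t, e) # B)"
    and fun_eq: "\<forall>x < mode_size ((s, d) # A). mode_fun ((s, d) # A) x = mode_fun ((t, e) # B) x"
  shows "t \<le> s"
proof (rule ccontr)
  assume "\<not> t \<le> s"
  then have "s < t" by simp
  have "2 \<le> s"
    using coalesced_ConsD [OF cA] by simp
  have "0 < mode_size B"
    using coalesced_ConsD [OF cB] mode_size_pos_if_coalesced by blast
  then have "t \<le> mode_size ((t, e) # B)"
    by simp
  with \<open>s < t\<close> have s_in: "s < mode_size ((s, d) # A)"
    unfolding size_eq by (rule less_le_trans)
  then obtain s' d' A' where A: "A = (s', d') # A'"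
    by (cases A) auto
  with cA have "d' \<noteq> s * d" "2 \<le> s'"
    using coalesced_ConsD [of "(s', d')" A'] by auto
  have "1 < mode_size ((s, d) # A)"
    using s_in \<open>2 \<le> s\<close> by linarith
  then have "mode_fun ((s, d) # A) 1 = mode_fun ((t, e) # B) 1"
    using fun_eq by blast
  then have "d = e"
    using \<open>2 \<le> s\<close> \<open>s < t\<close> by simp
  have "mode_fun ((s, d) # A) s = mode_fun ((t, e) # B) s"
    using fun_eq s_in by blast
  then have "d' = s * e"
    using A \<open>2 \<le> s\<close> \<open>2 \<le> s'\<close> \<open>s < t\<close> by simp
  with \<open>d' \<noteq> s * d\<close> \<open>d = e\<close> show False
    by simp
qed

lemma coalesced_eq_iff_mode_fun_eq:
  assumes "coalesced A" and "coalesced B"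
  shows "(mode_size A = mode_size B \<and> (\<forall>x < mode_size A. mode_fun A x = mode_fun B x)) \<longleftrightarrow> A = B"
proof
  assume "mode_size A = mode_size B \<and> (\<forall>x < mode_size A. mode_fun A x = mode_fun B x)"
  with assms show "A = B"
  proof (induction A arbitrary: B)
    case Nil
    then show ?case
      by (cases B) (auto dest: mode_size_ge2_if_coalesced)
  next
    case (Cons a A)
    obtain s d where a: "a = (s, d)"
      by fastforce
    obtain t e B' where B: "B = (t, e) # B'"
      using Cons.prems by (cases B) (auto dest: mode_size_ge2_if_coalesced)
    have "t \<le> s"
      using coalesced_first_shape_le [of s d A t e B'] Cons.prems a B by simp
    moreover have "s \<le> t"
      using coalesced_first_shape_le [of t e B' s d A] Cons.prems a B by simp
    ultimately have "s = t"
      by simp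
    have "2 \<le> s"
      using coalesced_ConsD [OF Cons.prems(1)] a by simp
    have "1 < mode_size (a # A)"
      using mode_size_ge2_if_coalesced [OF Cons.prems(1)] by simp
    then have "mode_fun (a # A) 1 = mode_fun B 1"
      using Cons.prems(3) by blast
    then have "d = e"
      using a B \<open>s = t\<close> \<open>2 \<le> s\<close> by simp
    have "mode_size A = mode_size B'"
      using Cons.prems(3) a B \<open>s = t\<close> \<open>2 \<le> s\<close> by simp
    moreover have "\<forall>y < mode_size A. mode_fun A y = mode_fun B' y"
    proof (intro allI impI)
      fix y
      assume "y < mode_size A"
      then have "s * y < mode_size (a # A)"
        using a \<open>2 \<le> s\<close> by simp
      then have "mode_fun (a # A) (s * y) = mode_fun B (s * y)"
        using Cons.prems(3) by blast
      then show "mode_fun A y = mode_fun B' y"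
        using a B \<open>s = t\<close> \<open>2 \<le> s\<close> by simp
    qed
    ultimately have "A = B'"
      using Cons.IH coalesced_ConsD [OF Cons.prems(1)] coalesced_ConsD [OF Cons.prems(2) [unfolded B]]
      by blast
    with a B \<open>s = t\<close> \<open>d = e\<close> show ?case
      by simp
  qed
qed simp

lemma modes_layout_of_modes: "modes (layout_of_modes ms) = (if ms = [] then [(1, 0)] else ms)"
  by (cases ms rule: remdups_adj.cases)
    (simp_all add: layout_of_modes_def modes_def comp_def zip_map_fst_snd)

lemma layout_of_modes_inj:
  assumes "coalesced A" and "coalesced B" and "layout_of_modes A = layout_of_modes B"
  shows "A = B"
proof -
  have "modes (layout_of_modes A) = modes (layout_of_modes B)"
    using assms(3) by simp
  with assms(1,2) show ?thesis
    by (auto simp: modes_layout_of_modes split: if_splits)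
qed

theorem mainTheorem16:
  assumes "is_layout A" and "is_layout B"
  shows "same_layout_fun A B \<longleftrightarrow> coal A = coal B"
proof -
  let ?A = "coal_flat (modes A)" and ?B = "coal_flat (modes B)"
  have "same_layout_fun A B \<longleftrightarrow>
      mode_size ?A = mode_size ?B \<and> (\<forall>x < mode_size ?A. mode_fun ?A x = mode_fun ?B x)"
    using assms
    by (simp add: same_layout_fun_def mode_size_coal_flat mode_fun_coal_flat
        mode_size_modes mode_fun_modes)
  also have "\<dots> \<longleftrightarrow> ?A = ?B"
    using assms by (intro coalesced_eq_iff_mode_fun_eq coalesced_coal_flat_modes)
  also have "\<dots> \<longleftrightarrow> coal A = coal B"
    using assms layout_of_modes_inj coalesced_coal_flat_modes
    by (metis coal_eq_layout_of_modes)
  finally show ?thesis .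
qed

end
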